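(* Let $Q$ be a quantity space over a field $K$ with a basis $E=\{e_1,\ldots,e_n\}$. Then the subset $U=\{1\cdot\prod_{i=1}^n e_i^{k_i}\mid k_1,\ldots,k_n\in\mathbb{Z}\}$ of $Q$ is a coherent system of unit quantities for $Q$.
   Context: A scalable monoid over a (unital, associative) ring $R$ is a monoid $X$ (identity $1_X$, product written $xy$) together with a map $R\times X\to X$, $(\alpha,x)\mapsto\alpha\cdot x$, such that $1\cdot x=x$, $\alpha\cdot(\beta\cdot x)=\alpha\beta\cdot x$ and $\alpha\cdot(xy)=(\alpha\cdot x)y=x(\alpha\cdot y)$. A quantity space over a field $K$ is a commutative scalable monoid $Q$ over $K$ for which there exists a basis, i.e. a finite set $\{e_1,\ldots,e_n\}$ of invertible elements of $Q$ such that every $x\in Q$ has a unique expansion $x=\mu\cdot\prod_{i=1}^n e_i^{k_i}$ with $\mu\in K$ and $k_i\in\mathbb{Z}$. On $Q$, $x\sim y$ iff $\alpha\cdot x=\beta\cdot y$ for some $\alpha,\beta\in K$. A unit element (unit quantity) is an element $u$ such that every $x\sim u$ equals $\lambda\cdot u$ for some $\lambda\in K$ and $\lambda\cdot u=\lambda'\cdot u$ implies $\lambda=\lambda'$. A set $U\subseteq Q$ is dense if for every $x\in Q$ there is $u\in U$ with $u\sim x$, and sparse if $u\sim v$ implies $u=v$ for $u,v\in U$. A coherent system of unit quantities is a submonoid of $Q$ that is a dense and sparse set of unit elements. *)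

theory Defs
  imports Main
begin

definition scalable_monoid :: "('k::ring_1 \<Rightarrow> 'q::monoid_mult \<Rightarrow> 'q) \<Rightarrow> bool" where
  "scalable_monoid smul \<longleftrightarrow>
     (\<forall>x. smul 1 x = x) \<and>
     (\<forall>a b x. smul a (smul b x) = smul (a * b) x) \<and>
     (\<forall>a x y. smul a (x * y) = smul a x * y \<and> smul a (x * y) = x * smul a y)"

definition invertible :: "'q::monoid_mult \<Rightarrow> bool" where
  "invertible x \<longleftrightarrow> (\<exists>y. x * y = 1 \<and> y * x = 1)"

definition minv :: "'q::monoid_mult \<Rightarrow> 'q" where
  "minv x = (THE y. x * y = 1 \<and> y * x = 1)"

definition zpow :: "'q::monoid_mult \<Rightarrow> int \<Rightarrow> 'q" where
  "zpow x k = (if 0 \<le> k then x ^ nat k else minv x ^ nat (- k))"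

definition is_basis :: "('k::field \<Rightarrow> 'q::comm_monoid_mult \<Rightarrow> 'q) \<Rightarrow> 'q set \<Rightarrow> bool" where
  "is_basis smul E \<longleftrightarrow>
     finite E \<and> (\<forall>e\<in>E. invertible e) \<and>
     (\<forall>x. \<exists>\<mu> k. x = smul \<mu> (\<Prod>e\<in>E. zpow e (k e))) \<and>
     (\<forall>\<mu> k \<mu>' k'. smul \<mu> (\<Prod>e\<in>E. zpow e (k e)) = smul \<mu>' (\<Prod>e\<in>E. zpow e (k' e))
        \<longrightarrow> \<mu> = \<mu>' \<and> (\<forall>e\<in>E. k e = k' e))"

definition quantity_space :: "('k::field \<Rightarrow> 'q::comm_monoid_mult \<Rightarrow> 'q) \<Rightarrow> bool" where
  "quantity_space smul \<longleftrightarrow> scalable_monoid smul \<and> (\<exists>E. is_basis smul E)"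

definition qsim :: "('k \<Rightarrow> 'q \<Rightarrow> 'q) \<Rightarrow> 'q \<Rightarrow> 'q \<Rightarrow> bool" where
  "qsim smul x y \<longleftrightarrow> (\<exists>a b. smul a x = smul b y)"

definition unit_element :: "('k \<Rightarrow> 'q \<Rightarrow> 'q) \<Rightarrow> 'q \<Rightarrow> bool" where
  "unit_element smul u \<longleftrightarrow>
     (\<forall>x. qsim smul x u \<longrightarrow> (\<exists>l. x = smul l u)) \<and>
     (\<forall>l l'. smul l u = smul l' u \<longrightarrow> l = l')"

definition dense_set :: "('k \<Rightarrow> 'q \<Rightarrow> 'q) \<Rightarrow> 'q set \<Rightarrow> bool" where
  "dense_set smul U \<longleftrightarrow> (\<forall>x. \<exists>u\<in>U. qsim smul u x)"

definition sparse_set :: "('k \<Rightarrow> 'q \<Rightarrow> 'q) \<Rightarrow> 'q set \<Rightarrow> bool" where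
  "sparse_set smul U \<longleftrightarrow> (\<forall>u\<in>U. \<forall>v\<in>U. qsim smul u v \<longrightarrow> u = v)"

definition submonoid :: "'q::monoid_mult set \<Rightarrow> bool" where
  "submonoid U \<longleftrightarrow> 1 \<in> U \<and> (\<forall>x\<in>U. \<forall>y\<in>U. x * y \<in> U)"

definition coherent_system :: "('k \<Rightarrow> 'q::monoid_mult \<Rightarrow> 'q) \<Rightarrow> 'q set \<Rightarrow> bool" where
  "coherent_system smul U \<longleftrightarrow> submonoid U \<and> dense_set smul U \<and> sparse_set smul U \<and>
     (\<forall>u\<in>U. unit_element smul u)"

end

(* By the basis property every quantity is, uniquely, a scalar multiple mu * u of a monomial
   u = prod e_i^(k_i); this unique scaling representation alone makes the monomials a dense,
   sparse set of unit elements. They form a submonoid because integer powers of an invertible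
   element satisfy e^a * e^b = e^(a + b). *)

theory Submission
  imports Defs
begin

lemma invertible_minv:
  fixes x :: "'q::monoid_mult"
  assumes "invertible x"
  shows mult_minv_right: "x * minv x = 1" and mult_minv_left: "minv x * x = 1"
proof -
  obtain y where y: "x * y = 1" "y * x = 1"
    using assms unfolding invertible_def by blast
  have "z = y" if "x * z = 1" "z * x = 1" for z
  proof -
    have "z = (z * x) * y" using y(1) by (simp add: mult.assoc)
    then show "z = y" using that(2) by simp
  qed
  then have "\<exists>!y. x * y = 1 \<and> y * x = 1" using y by blast
  from theI'[OF this] show "x * minv x = 1" "minv x * x = 1"
    unfolding minv_def by blast+
qed

lemma zpow_succ:
  fixes x :: "'q::monoid_mult"
  assumes "invertible x"
  shows "zpow x (k + 1) = zpow x k * x"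
proof (cases "0 \<le> k")
  case True
  then have "nat (k + 1) = Suc (nat k)" by simp
  with True show ?thesis by (simp add: zpow_def power_commutes)
next
  case False
  then have m: "nat (- k) = Suc (nat (- (k + 1)))" by arith
  have "minv x ^ Suc m * x = minv x ^ m" for m
    by (simp only: power_Suc2 mult.assoc mult_minv_left[OF assms] mult_1_right)
  with False m show ?thesis by (simp add: zpow_def)
qed

lemma zpow_pred:
  fixes x :: "'q::monoid_mult"
  assumes "invertible x"
  shows "zpow x (k - 1) = zpow x k * minv x"
proof (cases "k \<le> 0")
  case True
  then have "nat (- (k - 1)) = Suc (nat (- k))" by simp
  with True show ?thesis by (simp add: zpow_def power_commutes)
next
  case False
  then have m: "nat k = Suc (nat (k - 1))" by arith
  have "x ^ Suc m * minv x = x ^ m" for m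
    by (simp only: power_Suc2 mult.assoc mult_minv_right[OF assms] mult_1_right)
  with False m show ?thesis by (simp add: zpow_def)
qed

lemma zpow_add:
  fixes x :: "'q::monoid_mult"
  assumes "invertible x"
  shows "zpow x (a + b) = zpow x a * zpow x b"
proof (induction b rule: int_induct[where k = 0])
  case base
  then show ?case by (simp add: zpow_def)
next
  case (step1 i)
  then show ?case
    using zpow_succ[OF assms, of "a + i"] zpow_succ[OF assms, of i]
    by (simp add: add.assoc mult.assoc)
next
  case (step2 i)
  then show ?case
    using zpow_pred[OF assms, of "a + i"] zpow_pred[OF assms, of i]
    by (simp add: add_diff_eq mult.assoc)
qed

definition monomials :: "'q::comm_monoid_mult set \<Rightarrow> 'q set" where
  "monomials E = range (\<lambda>k. \<Prod>e\<in>E. zpow e (k e))"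

lemma submonoid_monomials:
  fixes E :: "'q::comm_monoid_mult set"
  assumes "\<forall>e\<in>E. invertible e"
  shows "submonoid (monomials E)"
  unfolding submonoid_def
proof
  show "1 \<in> monomials E"
    unfolding monomials_def by (rule range_eqI[where x = "\<lambda>_. 0"]) (simp add: zpow_def)
  have "(\<Prod>e\<in>E. zpow e (k e)) * (\<Prod>e\<in>E. zpow e (l e)) = (\<Prod>e\<in>E. zpow e (k e + l e))"
    for k l :: "'q \<Rightarrow> int"
    using assms by (simp add: zpow_add prod.distrib cong: prod.cong)
  then show "\<forall>u\<in>monomials E. \<forall>v\<in>monomials E. u * v \<in> monomials E"
    unfolding monomials_def by auto
qed

lemma is_basis_scaled_monomial:
  assumes "is_basis smul E"
  shows "\<exists>\<mu>. \<exists>u\<in>monomials E. x = smul \<mu> u"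
proof -
  obtain \<mu> k where "x = smul \<mu> (\<Prod>e\<in>E. zpow e (k e))"
    using assms unfolding is_basis_def by meson
  then show ?thesis unfolding monomials_def by blast
qed

lemma is_basis_scaled_monomial_unique:
  assumes "is_basis smul E" "u \<in> monomials E" "v \<in> monomials E"
    and "smul a u = smul b v"
  shows "a = b \<and> u = v"
proof -
  obtain k l where u: "u = (\<Prod>e\<in>E. zpow e (k e))" and v: "v = (\<Prod>e\<in>E. zpow e (l e))"
    using assms(2,3) unfolding monomials_def by blast
  have "a = b \<and> (\<forall>e\<in>E. k e = l e)"
    using assms(1,4) unfolding is_basis_def u v by metis
  with u v show ?thesis by (auto intro: prod.cong)
qed

lemma coherent_system_if_unique_scaling:
  fixes smul :: "'k::ring_1 \<Rightarrow> 'q::monoid_mult \<Rightarrow> 'q"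
  assumes "scalable_monoid smul" "submonoid U"
    and scaled: "\<And>x. \<exists>\<mu>. \<exists>u\<in>U. x = smul \<mu> u"
    and unique: "\<And>a b u v. u \<in> U \<Longrightarrow> v \<in> U \<Longrightarrow> smul a u = smul b v \<Longrightarrow> a = b \<and> u = v"
  shows "coherent_system smul U"
proof -
  have smul_one: "\<And>x. smul 1 x = x"
    and smul_smul: "\<And>a b x. smul a (smul b x) = smul (a * b) x"
    using assms(1) unfolding scalable_monoid_def by auto
  have "dense_set smul U"
  proof (unfold dense_set_def qsim_def, intro allI)
    fix x
    obtain \<mu> u where "u \<in> U" "x = smul \<mu> u" using scaled by blast
    then have "smul \<mu> u = smul 1 x" by (simp add: smul_one)
    with \<open>u \<in> U\<close> show "\<exists>u\<in>U. \<exists>a b. smul a u = smul b x" by blast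
  qed
  moreover have "sparse_set smul U"
    unfolding sparse_set_def qsim_def using unique by blast
  moreover have "unit_element smul u" if "u \<in> U" for u
    unfolding unit_element_def qsim_def
  proof (intro conjI allI impI)
    fix x assume "\<exists>a b. smul a x = smul b u"
    then obtain a b where ab: "smul a x = smul b u" by blast
    obtain \<mu> w where "w \<in> U" and x: "x = smul \<mu> w" using scaled by blast
    with ab have "smul (a * \<mu>) w = smul b u" by (simp add: smul_smul)
    then have "w = u" using unique \<open>w \<in> U\<close> \<open>u \<in> U\<close> by blast
    with x show "\<exists>l. x = smul l u" by blast
  next
    fix l l' assume "smul l u = smul l' u"
    then show "l = l'" using unique \<open>u \<in> U\<close> by blast
  qed
  ultimately show ?thesis
    using \<open>submonoid U\<close> unfolding coherent_system_def by blast
qed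

theorem proposition3p10:
  fixes smul :: "'k::field \<Rightarrow> 'q::comm_monoid_mult \<Rightarrow> 'q"
    and E :: "'q set"
  assumes "quantity_space smul"
    and "is_basis smul E"
  shows "coherent_system smul {smul 1 (\<Prod>e\<in>E. zpow e (k e)) | k :: 'q \<Rightarrow> int. True}"
proof -
  have scalable: "scalable_monoid smul"
    using assms(1) by (simp add: quantity_space_def)
  have invertible: "\<forall>e\<in>E. invertible e"
    using assms(2) by (simp add: is_basis_def)
  have "coherent_system smul (monomials E)"
    by (intro coherent_system_if_unique_scaling scalable submonoid_monomials invertible
        is_basis_scaled_monomial[OF assms(2)] is_basis_scaled_monomial_unique[OF assms(2)])
  moreover have "{smul 1 (\<Prod>e\<in>E. zpow e (k e)) | k :: 'q \<Rightarrow> int. True} = monomials E"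
    using scalable unfolding scalable_monoid_def monomials_def by auto
  ultimately show ?thesis by simp
qed

end
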